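(* Suppose $\mathrm{char}(\mathbb{F})=0$. Then for every commutative unital $\mathbb{F}$-algebra $A$, $$\mathfrak{P}^{\mathrm{cu}}(A)=\ker\big(d:A\to\Omega^1(A)\big)=\mathcal{H}^0_{\mathrm{deR}}(A);$$ equivalently, for every affine scheme $S$ over $\mathbb{F}$, $\pi_0(S)=\mathcal{H}^0_{\mathrm{deR}}(S)$.
   Context: $\mathbb{F}$ is a field. For a commutative unital algebra $A$, $\mathfrak{P}^{\mathrm{cu}}(A)$ is the set of $a\in A$ such that for every commutative unital algebra $C$ and every unit-preserving morphism $\varphi:A\to C[x]$, $\varphi(a)$ is a constant polynomial (lies in $C\subseteq C[x]$); it is a unital subalgebra (the paper defines it via a universal pro-algebra $\mathfrak{M}^{\mathrm{cu}}_{A,\mathbb{F}[x]}$ and proves equality with this set). $d:A\to\Omega^1(A)$ is the universal derivation into the module of Kähler differentials of $A$ over $\mathbb{F}$, and $\mathcal{H}^0_{\mathrm{deR}}(A)$ is the degree-zero cohomology of the algebraic de Rham complex $\Omega(A)$, i.e. $\ker d$. For the affine scheme $S=\mathrm{Spec}(A)$, $\pi_0(S)$ denotes the affine scheme associated with $\mathfrak{P}^{\mathrm{cu}}(A)$ and $\mathcal{H}^0_{\mathrm{deR}}(S)=\mathcal{H}^0_{\mathrm{deR}}(A)$. *)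

theory Defs
  imports "HOL-Algebra.Algebra"
begin

definition char_zero_ring :: "('k, 'm) ring_scheme \<Rightarrow> bool" where
  "char_zero_ring F \<longleftrightarrow> (\<forall>n::nat. n > 0 \<longrightarrow> [n] \<cdot>\<^bsub>F\<^esub> \<one>\<^bsub>F\<^esub> \<noteq> \<zero>\<^bsub>F\<^esub>)"

text \<open>A commutative unital F-algebra is a commutative ring A together with a
  structure (unital ring) homomorphism eta : F -> A.
  The algebras C range over rings whose carrier lives in the type 'c.\<close>
definition Pcu :: "'c itself \<Rightarrow> 'k ring \<Rightarrow> 'a ring \<Rightarrow> ('k \<Rightarrow> 'a) \<Rightarrow> 'a set" where
  "Pcu _ F A eta = {a \<in> carrier A.
     \<forall>(C::'c ring) etaC phi.
        (cring C \<and> etaC \<in> ring_hom F C \<and> phi \<in> ring_hom A (UP C) \<and>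
         (\<forall>c \<in> carrier F. phi (eta c) = monom (UP C) (etaC c) 0))
        \<longrightarrow> (\<exists>c \<in> carrier C. phi a = monom (UP C) c 0)}"

text \<open>Kaehler differentials: Omega^1(A) = (free A-module on symbols delta_a, a in A)
  modulo the A-submodule generated by the relations
  delta(a+b) - delta a - delta b, delta(ab) - a delta b - b delta a,
  delta(eta(l) a) - eta(l) delta a.  The universal derivation is d a = [delta a].
  Elements of the free module are represented as functions 'a => 'a.\<close>

definition kd_delta :: "'a ring \<Rightarrow> 'a \<Rightarrow> ('a \<Rightarrow> 'a)" where
  "kd_delta A a = (\<lambda>x. if x = a then \<one>\<^bsub>A\<^esub> else \<zero>\<^bsub>A\<^esub>)"

definition kd_add :: "'a ring \<Rightarrow> ('a \<Rightarrow> 'a) \<Rightarrow> ('a \<Rightarrow> 'a) \<Rightarrow> ('a \<Rightarrow> 'a)" where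
  "kd_add A f g = (\<lambda>x. f x \<oplus>\<^bsub>A\<^esub> g x)"

definition kd_smult :: "'a ring \<Rightarrow> 'a \<Rightarrow> ('a \<Rightarrow> 'a) \<Rightarrow> ('a \<Rightarrow> 'a)" where
  "kd_smult A c f = (\<lambda>x. c \<otimes>\<^bsub>A\<^esub> f x)"

definition kd_minus :: "'a ring \<Rightarrow> ('a \<Rightarrow> 'a) \<Rightarrow> ('a \<Rightarrow> 'a) \<Rightarrow> ('a \<Rightarrow> 'a)" where
  "kd_minus A f g = (\<lambda>x. f x \<ominus>\<^bsub>A\<^esub> g x)"

definition kd_gens :: "'k ring \<Rightarrow> 'a ring \<Rightarrow> ('k \<Rightarrow> 'a) \<Rightarrow> ('a \<Rightarrow> 'a) set" where
  "kd_gens F A eta =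
     {kd_minus A (kd_minus A (kd_delta A (a \<oplus>\<^bsub>A\<^esub> b)) (kd_delta A a)) (kd_delta A b)
        | a b. a \<in> carrier A \<and> b \<in> carrier A}
   \<union> {kd_minus A (kd_minus A (kd_delta A (a \<otimes>\<^bsub>A\<^esub> b)) (kd_smult A a (kd_delta A b)))
          (kd_smult A b (kd_delta A a))
        | a b. a \<in> carrier A \<and> b \<in> carrier A}
   \<union> {kd_minus A (kd_delta A (eta l \<otimes>\<^bsub>A\<^esub> a)) (kd_smult A (eta l) (kd_delta A a))
        | l a. l \<in> carrier F \<and> a \<in> carrier A}"

inductive_set kd_rels :: "'k ring \<Rightarrow> 'a ring \<Rightarrow> ('k \<Rightarrow> 'a) \<Rightarrow> ('a \<Rightarrow> 'a) set"
  for F :: "'k ring" and A :: "'a ring" and eta :: "'k \<Rightarrow> 'a" where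
  kd_rels_zero: "(\<lambda>x. \<zero>\<^bsub>A\<^esub>) \<in> kd_rels F A eta"
| kd_rels_step: "\<lbrakk> r \<in> kd_gens F A eta; c \<in> carrier A; v \<in> kd_rels F A eta \<rbrakk>
                 \<Longrightarrow> kd_add A (kd_smult A c r) v \<in> kd_rels F A eta"

text \<open>ker (d : A -> Omega^1(A)): d a = 0 iff delta a lies in the relation submodule.\<close>
definition ker_d :: "'k ring \<Rightarrow> 'a ring \<Rightarrow> ('k \<Rightarrow> 'a) \<Rightarrow> 'a set" where
  "ker_d F A eta = {a \<in> carrier A. kd_delta A a \<in> kd_rels F A eta}"

text \<open>Degree-zero de Rham cohomology H^0_dR(A) = ker d (Omega^0(A) = A, first differential d).\<close>
definition deRham_H0 :: "'k ring \<Rightarrow> 'a ring \<Rightarrow> ('k \<Rightarrow> 'a) \<Rightarrow> 'a set" where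
  "deRham_H0 F A eta = ker_d F A eta"

end

theory Submission
  imports Defs
begin

text \<open>
  If \<open>phi : A \<rightarrow> C[x]\<close> maps \<open>F\<close> to constants, then \<open>a \<mapsto> (phi a)'\<close> is an \<open>F\<close>-derivation of \<open>A\<close>
  along \<open>phi\<close>. Every such derivation vanishes on the Kaehler relations, hence on \<open>ker d\<close>, and in
  characteristic 0 a polynomial with zero derivative is constant; so \<open>ker d \<subseteq> P\<^sup>c\<^sup>u(A)\<close>.

  Conversely, \<open>a \<mapsto> a + (d a) x\<close> is a ring map from \<open>A\<close> into the polynomials over the square-zero
  extension \<open>A \<oplus> \<Omega>\<^sup>1(A)\<close>, so \<open>d a = 0\<close> for \<open>a \<in> P\<^sup>c\<^sup>u(A)\<close>. As \<open>P\<^sup>c\<^sup>u(A)\<close> only tests rings whose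
  carrier lives in the type of \<open>A\<close>, this extension is first copied into that type: a nonzero algebra
  over a field of characteristic 0 is infinite, so \<open>A \<oplus> \<Omega>\<^sup>1(A)\<close> is no larger than \<open>A\<close>.
\<close>

section \<open>Formal derivative of polynomials\<close>

definition up_deriv :: "('c, 'm) ring_scheme \<Rightarrow> (nat \<Rightarrow> 'c) \<Rightarrow> nat \<Rightarrow> 'c" where
  "up_deriv R p = (\<lambda>n. [Suc n] \<cdot>\<^bsub>R\<^esub> coeff (UP R) p (Suc n))"

lemma carrier_UP: "carrier (UP R) = up R"
  by (simp add: UP_def)

lemma coeff_UP: "p \<in> carrier (UP R) \<Longrightarrow> coeff (UP R) p = p"
  by (simp add: UP_def)

lemma additive_eq_on_monoms:
  fixes f g :: "(nat \<Rightarrow> 'c) \<Rightarrow> 'b" and M :: "('b, 'n) ring_scheme"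
  assumes R: "cring R" and p: "p \<in> carrier (UP R)"
    and f: "\<And>p q. p \<in> carrier (UP R) \<Longrightarrow> q \<in> carrier (UP R) \<Longrightarrow>
      f (p \<oplus>\<^bsub>UP R\<^esub> q) = f p \<oplus>\<^bsub>M\<^esub> f q"
    and g: "\<And>p q. p \<in> carrier (UP R) \<Longrightarrow> q \<in> carrier (UP R) \<Longrightarrow>
      g (p \<oplus>\<^bsub>UP R\<^esub> q) = g p \<oplus>\<^bsub>M\<^esub> g q"
    and monom: "\<And>a n. a \<in> carrier R \<Longrightarrow> f (monom (UP R) a n) = g (monom (UP R) a n)"
  shows "f p = g p"
proof -
  interpret R: cring R by (rule R)
  interpret U: UP_cring R "UP R" by unfold_locales simp
  let ?m = "\<lambda>i. monom (UP R) (coeff (UP R) p i) i"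
  have "f (finsum (UP R) ?m S) = g (finsum (UP R) ?m S)" if "finite S" "S \<noteq> {}" for S
    using that
  proof (induction S rule: finite_ne_induct)
    case (singleton i)
    have "finsum (UP R) ?m {i} = ?m i" using U.P.finsum_insert[of "{}" i ?m] p by simp
    then show ?case using monom[OF U.coeff_closed[OF p]] by simp
  next
    case (insert i S)
    have mi: "?m i \<in> carrier (UP R)" and mS: "finsum (UP R) ?m S \<in> carrier (UP R)"
      using p by (auto intro: U.P.finsum_closed)
    have "finsum (UP R) ?m (insert i S) = ?m i \<oplus>\<^bsub>UP R\<^esub> finsum (UP R) ?m S"
      by (rule U.P.finsum_insert) (use insert.hyps p in auto)
    then show ?case
      using insert.IH by (simp add: f[OF mi mS] g[OF mi mS] monom[OF U.coeff_closed[OF p]])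
  qed
  from this[of "{..deg R p}"] show ?thesis by (simp add: U.up_repr[OF p])
qed

context
  fixes R :: "('c, 'm) ring_scheme" (structure)
  assumes R: "cring R"
begin

interpretation R: cring R by (rule R)
interpretation U: UP_cring R "UP R" by unfold_locales simp

lemma up_deriv_closed [simp]:
  assumes p: "p \<in> carrier (UP R)" shows "up_deriv R p \<in> carrier (UP R)"
proof -
  obtain n where n: "bound \<zero> n p"
    using p unfolding carrier_UP up_def by blast
  have "bound \<zero> n (up_deriv R p)"
  proof
    fix m assume "n < m"
    then show "up_deriv R p m = \<zero>"
      using bound.bound[OF n, of "Suc m"] by (simp add: up_deriv_def coeff_UP[OF p])
  qed
  moreover have "up_deriv R p i \<in> carrier R" for i
    unfolding up_deriv_def using p by (intro R.add.nat_pow_closed U.coeff_closed)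
  ultimately show ?thesis unfolding carrier_UP by (intro mem_upI) auto
qed

lemma coeff_up_deriv [simp]:
  assumes "p \<in> carrier (UP R)"
  shows "coeff (UP R) (up_deriv R p) n = [Suc n] \<cdot> coeff (UP R) p (Suc n)"
  using coeff_UP[OF up_deriv_closed[OF assms]] by (simp add: up_deriv_def)

lemma up_deriv_add:
  assumes "p \<in> carrier (UP R)" "q \<in> carrier (UP R)"
  shows "up_deriv R (p \<oplus>\<^bsub>UP R\<^esub> q) = up_deriv R p \<oplus>\<^bsub>UP R\<^esub> up_deriv R q"
  by (rule U.up_eqI) (use assms in \<open>simp_all add: R.add.nat_pow_distrib del: R.add.nat_pow_Suc\<close>)

lemma up_deriv_monom:
  assumes "a \<in> carrier R"
  shows "up_deriv R (monom (UP R) a n) = monom (UP R) ([n] \<cdot> a) (n - 1)"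
  by (rule U.up_eqI) (use assms in \<open>cases n, auto\<close>)

lemma up_deriv_monom_mult:
  assumes a: "a \<in> carrier R" and b: "b \<in> carrier R"
  shows "up_deriv R (monom (UP R) a n \<otimes>\<^bsub>UP R\<^esub> monom (UP R) b m) =
    monom (UP R) a n \<otimes>\<^bsub>UP R\<^esub> up_deriv R (monom (UP R) b m) \<oplus>\<^bsub>UP R\<^esub>
    monom (UP R) b m \<otimes>\<^bsub>UP R\<^esub> up_deriv R (monom (UP R) a n)"
proof -
  have shift: "monom (UP R) c k \<otimes>\<^bsub>UP R\<^esub> monom (UP R) ([l] \<cdot> d) (l - 1)
      = monom (UP R) ([l] \<cdot> (c \<otimes> d)) (k + l - 1)"
    if "c \<in> carrier R" "d \<in> carrier R" for c d k l
    using that by (cases l)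
      (simp_all add: R.add_pow_rdistr U.monom_mult[symmetric] del: U.monom_mult R.add.nat_pow_Suc)
  have lhs: "up_deriv R (monom (UP R) a n \<otimes>\<^bsub>UP R\<^esub> monom (UP R) b m)
      = monom (UP R) ([(n + m)] \<cdot> (a \<otimes> b)) (n + m - 1)"
    using a b by (simp add: up_deriv_monom U.monom_mult[symmetric] del: U.monom_mult)
  have "[(n + m)] \<cdot> (a \<otimes> b) = [m] \<cdot> (a \<otimes> b) \<oplus> [n] \<cdot> (b \<otimes> a)"
    using a b by (simp add: R.add.nat_pow_mult[symmetric] R.m_comm R.a_comm add.commute)
  moreover have "monom (UP R) a n \<otimes>\<^bsub>UP R\<^esub> up_deriv R (monom (UP R) b m)
      = monom (UP R) ([m] \<cdot> (a \<otimes> b)) (n + m - 1)"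
    unfolding up_deriv_monom[OF b] by (rule shift[OF a b])
  moreover have "monom (UP R) b m \<otimes>\<^bsub>UP R\<^esub> up_deriv R (monom (UP R) a n)
      = monom (UP R) ([n] \<cdot> (b \<otimes> a)) (n + m - 1)"
    unfolding up_deriv_monom[OF a] shift[OF b a] by (simp add: add.commute)
  ultimately show ?thesis
    using a b by (simp add: lhs U.monom_add[symmetric] del: U.monom_add U.monom_mult)
qed

lemma up_deriv_mult:
  assumes p: "p \<in> carrier (UP R)" and q: "q \<in> carrier (UP R)"
  shows "up_deriv R (p \<otimes>\<^bsub>UP R\<^esub> q) =
    p \<otimes>\<^bsub>UP R\<^esub> up_deriv R q \<oplus>\<^bsub>UP R\<^esub> q \<otimes>\<^bsub>UP R\<^esub> up_deriv R p"
proof -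
  let ?L = "\<lambda>p q. up_deriv R (p \<otimes>\<^bsub>UP R\<^esub> q)"
  let ?R = "\<lambda>p q. p \<otimes>\<^bsub>UP R\<^esub> up_deriv R q \<oplus>\<^bsub>UP R\<^esub> q \<otimes>\<^bsub>UP R\<^esub> up_deriv R p"
  have L_left: "?L (p1 \<oplus>\<^bsub>UP R\<^esub> p2) q = ?L p1 q \<oplus>\<^bsub>UP R\<^esub> ?L p2 q"
    and L_right: "?L q (p1 \<oplus>\<^bsub>UP R\<^esub> p2) = ?L q p1 \<oplus>\<^bsub>UP R\<^esub> ?L q p2"
    if "p1 \<in> carrier (UP R)" "p2 \<in> carrier (UP R)" "q \<in> carrier (UP R)" for p1 p2 q
    using that by (simp_all add: U.P.l_distr U.P.r_distr up_deriv_add)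
  have R_left: "?R (p1 \<oplus>\<^bsub>UP R\<^esub> p2) q = ?R p1 q \<oplus>\<^bsub>UP R\<^esub> ?R p2 q"
    and R_right: "?R q (p1 \<oplus>\<^bsub>UP R\<^esub> p2) = ?R q p1 \<oplus>\<^bsub>UP R\<^esub> ?R q p2"
    if "p1 \<in> carrier (UP R)" "p2 \<in> carrier (UP R)" "q \<in> carrier (UP R)" for p1 p2 q
    using that by (simp_all add: U.P.l_distr U.P.r_distr up_deriv_add U.P.a_ac)
  have monom_left: "?L (monom (UP R) a n) q = ?R (monom (UP R) a n) q"
    if "a \<in> carrier R" "q \<in> carrier (UP R)" for a n q
    by (rule additive_eq_on_monoms[OF R \<open>q \<in> carrier (UP R)\<close>])
      (use that in \<open>simp_all add: L_right R_right up_deriv_monom_mult\<close>)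
  show ?thesis
    by (rule additive_eq_on_monoms[OF R p, where f = "\<lambda>p. ?L p q" and g = "\<lambda>p. ?R p q"])
      (use q in \<open>simp_all add: L_left R_left monom_left\<close>)
qed

lemma up_deriv_eq_zero_imp_const:
  assumes p: "p \<in> carrier (UP R)" and deriv: "up_deriv R p = \<zero>\<^bsub>UP R\<^esub>"
    and torsion_free: "\<And>n c. c \<in> carrier R \<Longrightarrow> [Suc n] \<cdot> c = \<zero> \<Longrightarrow> c = \<zero>"
  shows "p = monom (UP R) (coeff (UP R) p 0) 0"
proof (rule U.up_eqI)
  fix n
  show "coeff (UP R) p n = coeff (UP R) (monom (UP R) (coeff (UP R) p 0) 0) n"
  proof (cases n)
    case (Suc k)
    have "[Suc k] \<cdot> coeff (UP R) p (Suc k) = \<zero>"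
      using arg_cong[OF deriv, of "\<lambda>r. coeff (UP R) r k"] p by simp
    then have "coeff (UP R) p (Suc k) = \<zero>" by (rule torsion_free[OF U.coeff_closed[OF p]])
    then show ?thesis using Suc p by simp
  qed (use p in simp)
qed (use p in simp_all)

lemma linear_poly_mult:
  assumes "a \<in> carrier R" "b \<in> carrier R" "c \<in> carrier R" "d \<in> carrier R" and "b \<otimes> d = \<zero>"
  shows "(monom (UP R) a 0 \<oplus>\<^bsub>UP R\<^esub> monom (UP R) b 1) \<otimes>\<^bsub>UP R\<^esub>
      (monom (UP R) c 0 \<oplus>\<^bsub>UP R\<^esub> monom (UP R) d 1)
    = monom (UP R) (a \<otimes> c) 0 \<oplus>\<^bsub>UP R\<^esub> monom (UP R) (a \<otimes> d \<oplus> c \<otimes> b) 1"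
proof -
  have "monom (UP R) b 1 \<otimes>\<^bsub>UP R\<^esub> monom (UP R) d 1 = \<zero>\<^bsub>UP R\<^esub>"
    using assms by (simp add: U.monom_mult[symmetric] del: U.monom_mult)
  with assms show ?thesis
    by (simp add: U.P.l_distr U.P.r_distr U.P.a_ac R.m_comm U.monom_mult[symmetric]
        U.monom_add[symmetric] del: U.monom_mult U.monom_add)
qed

end

section \<open>Kaehler relations\<close>

text \<open>Elements of the free \<open>A\<close>-module on the symbols \<open>\<delta>a\<close> are encoded as functions \<open>'a \<Rightarrow> 'a\<close>
  (cf. \<open>kd_delta\<close>); the genuine ones have finite support inside \<open>carrier A\<close>.\<close>

definition kd_free :: "'a ring \<Rightarrow> ('a \<Rightarrow> 'a) set" where
  "kd_free A = {f. f \<in> UNIV \<rightarrow> carrier A \<and> finite {x. f x \<noteq> \<zero>\<^bsub>A\<^esub>} \<and> {x. f x \<noteq> \<zero>\<^bsub>A\<^esub>} \<subseteq> carrier A}"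

lemma kd_free_closed [simp]: "f \<in> kd_free A \<Longrightarrow> f x \<in> carrier A"
  unfolding kd_free_def by auto

lemma kd_ops_apply:
  "kd_add A f g x = f x \<oplus>\<^bsub>A\<^esub> g x"
  "kd_smult A c f x = c \<otimes>\<^bsub>A\<^esub> f x"
  "kd_minus A f g x = f x \<ominus>\<^bsub>A\<^esub> g x"
  by (simp_all add: kd_add_def kd_smult_def kd_minus_def)

lemma kd_freeI:
  assumes "\<And>x. f x \<in> carrier A" "{x. f x \<noteq> \<zero>\<^bsub>A\<^esub>} \<subseteq> S" "finite S" "S \<subseteq> carrier A"
  shows "f \<in> kd_free A"
  using assms unfolding kd_free_def by (auto intro: finite_subset)

locale algebra_over =
  fixes F :: "'k ring" and A :: "'a ring" (structure) and eta :: "'k \<Rightarrow> 'a"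
  assumes cring_A: "cring A" and eta_hom: "eta \<in> ring_hom F A"

sublocale algebra_over \<subseteq> cring A by (rule cring_A)

context algebra_over
begin

lemma eta_closed [simp]: "l \<in> carrier F \<Longrightarrow> eta l \<in> carrier A"
  using eta_hom by (rule ring_hom_closed)

lemma kd_free_support:
  assumes "f \<in> kd_free A"
  shows "finite {x. f x \<noteq> \<zero>}" "{x. f x \<noteq> \<zero>} \<subseteq> carrier A"
  using assms unfolding kd_free_def by auto

lemma kd_free_zero: "(\<lambda>_. \<zero>) \<in> kd_free A"
  by (rule kd_freeI[where S = "{}"]) auto

lemma kd_free_delta: "a \<in> carrier A \<Longrightarrow> kd_delta A a \<in> kd_free A"
  by (rule kd_freeI[where S = "{a}"]) (auto simp: kd_delta_def)

lemma kd_free_add: "f \<in> kd_free A \<Longrightarrow> g \<in> kd_free A \<Longrightarrow> kd_add A f g \<in> kd_free A"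
  by (rule kd_freeI[where S = "{x. f x \<noteq> \<zero>} \<union> {x. g x \<noteq> \<zero>}"])
    (auto simp: kd_ops_apply kd_free_support)

lemma kd_free_smult: "c \<in> carrier A \<Longrightarrow> f \<in> kd_free A \<Longrightarrow> kd_smult A c f \<in> kd_free A"
  by (rule kd_freeI[where S = "{x. f x \<noteq> \<zero>}"]) (auto simp: kd_ops_apply kd_free_support)

lemma kd_free_minus: "f \<in> kd_free A \<Longrightarrow> g \<in> kd_free A \<Longrightarrow> kd_minus A f g \<in> kd_free A"
  by (rule kd_freeI[where S = "{x. f x \<noteq> \<zero>} \<union> {x. g x \<noteq> \<zero>}"])
    (auto simp: kd_ops_apply kd_free_support)

lemma kd_gens_free: "r \<in> kd_gens F A eta \<Longrightarrow> r \<in> kd_free A"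
  unfolding kd_gens_def
  by (auto intro!: kd_free_minus kd_free_smult kd_free_delta)

lemma kd_rels_free: "v \<in> kd_rels F A eta \<Longrightarrow> v \<in> kd_free A"
  by (induction rule: kd_rels.induct) (auto intro: kd_free_zero kd_free_add kd_free_smult kd_gens_free)

lemma kd_rels_add:
  "v \<in> kd_rels F A eta \<Longrightarrow> w \<in> kd_rels F A eta \<Longrightarrow> kd_add A v w \<in> kd_rels F A eta"
proof (induction rule: kd_rels.induct)
  case kd_rels_zero
  then show ?case
    using kd_rels_free[OF kd_rels_zero] by (simp add: kd_ops_apply fun_eq_iff)
next
  case (kd_rels_step r c v)
  have "kd_add A (kd_add A (kd_smult A c r) v) w = kd_add A (kd_smult A c r) (kd_add A v w)"
    using kd_rels_step kd_gens_free kd_rels_free by (simp add: kd_ops_apply fun_eq_iff a_assoc)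
  then show ?case using kd_rels_step by (simp add: kd_rels.kd_rels_step)
qed

lemma kd_rels_smult:
  assumes "c \<in> carrier A"
  shows "v \<in> kd_rels F A eta \<Longrightarrow> kd_smult A c v \<in> kd_rels F A eta"
proof (induction rule: kd_rels.induct)
  case kd_rels_zero
  show ?case
    using assms by (simp add: kd_ops_apply fun_eq_iff kd_rels.kd_rels_zero)
next
  case (kd_rels_step r d v)
  have "kd_smult A c (kd_add A (kd_smult A d r) v) = kd_add A (kd_smult A (c \<otimes> d) r) (kd_smult A c v)"
    using assms kd_rels_step kd_gens_free kd_rels_free
    by (simp add: kd_ops_apply fun_eq_iff r_distr m_assoc)
  then show ?case using assms kd_rels_step by (simp add: kd_rels.kd_rels_step)
qed

lemma kd_gens_rels:
  assumes "r \<in> kd_gens F A eta" shows "r \<in> kd_rels F A eta"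
proof -
  have "kd_add A (kd_smult A \<one> r) (\<lambda>_. \<zero>) = r"
    using kd_gens_free[OF assms] by (simp add: kd_ops_apply fun_eq_iff)
  then show ?thesis using kd_rels_step[OF assms one_closed kd_rels_zero] by simp
qed

end

section \<open>Characteristic zero\<close>

lemma ring_hom_add_pow:
  assumes "ring R" "ring S" "h \<in> ring_hom R S" "x \<in> carrier R"
  shows "h ([(n::nat)] \<cdot>\<^bsub>R\<^esub> x) = [n] \<cdot>\<^bsub>S\<^esub> h x"
proof -
  interpret ring_hom_ring R S h by (rule ring_hom_ringI2) fact+
  show ?thesis by (induction n) (simp_all add: assms)
qed

lemma char_zero_add_pow_cancel:
  assumes F: "field F" and cz: "char_zero_ring F" and C: "cring C" and h: "h \<in> ring_hom F C"
    and c: "c \<in> carrier C" and torsion: "[Suc n] \<cdot>\<^bsub>C\<^esub> c = \<zero>\<^bsub>C\<^esub>"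
  shows "c = \<zero>\<^bsub>C\<^esub>"
proof -
  interpret F: field F by fact
  interpret C: cring C by fact
  interpret h: ring_hom_cring F C h by (rule ring_hom_cringI) (fact F.is_cring, fact C, fact h)
  define k where "k = [Suc n] \<cdot>\<^bsub>F\<^esub> \<one>\<^bsub>F\<^esub>"
  have k: "k \<in> Units F"
    using cz F.field_Units unfolding char_zero_ring_def k_def by auto
  have "h k \<otimes>\<^bsub>C\<^esub> c = [Suc n] \<cdot>\<^bsub>C\<^esub> (\<one>\<^bsub>C\<^esub> \<otimes>\<^bsub>C\<^esub> c)"
    unfolding k_def ring_hom_add_pow[OF F.ring_axioms C.ring_axioms h F.one_closed] h.hom_one
    using c by (rule C.add_pow_ldistr[OF C.one_closed])
  then have hk: "h k \<otimes>\<^bsub>C\<^esub> c = \<zero>\<^bsub>C\<^esub>"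
    using c torsion by simp
  have "c = h (inv\<^bsub>F\<^esub> k \<otimes>\<^bsub>F\<^esub> k) \<otimes>\<^bsub>C\<^esub> c"
    using F.Units_l_inv[OF k] c by simp
  also have "\<dots> = h (inv\<^bsub>F\<^esub> k) \<otimes>\<^bsub>C\<^esub> (h k \<otimes>\<^bsub>C\<^esub> c)"
    using k c by (subst h.hom_mult) (auto simp: C.m_assoc F.Units_closed)
  also have "\<dots> = \<zero>\<^bsub>C\<^esub>"
    using k by (simp add: hk)
  finally show ?thesis .
qed

lemma char_zero_infinite_carrier:
  fixes A :: "'a ring" (structure)
  assumes F: "field F" and cz: "char_zero_ring F" and A: "algebra_over F A eta"
    and nontrivial: "\<one>\<^bsub>A\<^esub> \<noteq> \<zero>\<^bsub>A\<^esub>"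
  shows "infinite (carrier A)"
proof -
  interpret algebra_over F A eta by fact
  have nz: "[Suc k] \<cdot> \<one> \<noteq> \<zero>" for k
    using char_zero_add_pow_cancel[OF F cz is_cring eta_hom one_closed] nontrivial by blast
  have neq: "[(n::nat)] \<cdot> \<one> \<noteq> [(n + Suc k)] \<cdot> \<one>" for n k
  proof
    assume "[n] \<cdot> \<one> = [(n + Suc k)] \<cdot> \<one>"
    also have "\<dots> = [Suc k] \<cdot> \<one> \<oplus> [n] \<cdot> \<one>"
      using add.nat_pow_mult[of \<one> "Suc k" n] by (simp add: add.commute del: add.nat_pow_Suc)
    finally show False using nz[of k] by simp
  qed
  then have "inj (\<lambda>n::nat. [n] \<cdot> \<one>)"
  proof (intro linorder_injI)
    fix m n :: nat assume "m < n"
    then obtain k where "n = m + Suc k" using less_iff_Suc_add by auto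
    with neq show "[m] \<cdot> \<one> \<noteq> [n] \<cdot> \<one>" by blast
  qed
  then have "infinite (range (\<lambda>n::nat. [n] \<cdot> \<one>))"
    using finite_imageD infinite_UNIV_nat by blast
  moreover have "range (\<lambda>n::nat. [n] \<cdot> \<one>) \<subseteq> carrier A" by auto
  ultimately show ?thesis using finite_subset by blast
qed

section \<open>Derivations along a ring homomorphism\<close>

locale derivation_along = algebra_over F A eta + M: cring M
  for F :: "'k ring" and A :: "'a ring" (structure) and eta :: "'k \<Rightarrow> 'a"
    and M :: "('b, 'n) ring_scheme" +
  fixes h :: "'a \<Rightarrow> 'b" and D :: "'a \<Rightarrow> 'b"
  assumes hom: "h \<in> ring_hom A M"
    and D_closed [simp]: "a \<in> carrier A \<Longrightarrow> D a \<in> carrier M"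
    and D_add: "a \<in> carrier A \<Longrightarrow> b \<in> carrier A \<Longrightarrow> D (a \<oplus> b) = D a \<oplus>\<^bsub>M\<^esub> D b"
    and D_mult: "a \<in> carrier A \<Longrightarrow> b \<in> carrier A \<Longrightarrow>
      D (a \<otimes> b) = h a \<otimes>\<^bsub>M\<^esub> D b \<oplus>\<^bsub>M\<^esub> h b \<otimes>\<^bsub>M\<^esub> D a"
    and D_eta: "l \<in> carrier F \<Longrightarrow> a \<in> carrier A \<Longrightarrow> D (eta l \<otimes> a) = h (eta l) \<otimes>\<^bsub>M\<^esub> D a"

sublocale derivation_along \<subseteq> h: ring_hom_cring A M h
  by (rule ring_hom_cringI) (fact cring_A, fact M.is_cring, fact hom)

context derivation_along
begin

lemma D_one: "D \<one> = \<zero>\<^bsub>M\<^esub>"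
proof -
  have "D \<one> \<oplus>\<^bsub>M\<^esub> D \<one> = D \<one> \<oplus>\<^bsub>M\<^esub> \<zero>\<^bsub>M\<^esub>"
    using D_mult[of \<one> \<one>] by simp
  then show ?thesis by simp
qed

lemma D_eta_zero: "l \<in> carrier F \<Longrightarrow> D (eta l) = \<zero>\<^bsub>M\<^esub>"
  using D_eta[of l \<one>] by (simp add: D_one)

text \<open>The \<open>A\<close>-linear map on the free module sending \<open>\<delta>x\<close> to \<open>D x\<close>. That it vanishes on the
  Kaehler relations is the universal property of \<open>d\<close>.\<close>

definition kd_pairing :: "('a \<Rightarrow> 'a) \<Rightarrow> 'b" where
  "kd_pairing v = (\<Oplus>\<^bsub>M\<^esub>x\<in>{x. v x \<noteq> \<zero>}. h (v x) \<otimes>\<^bsub>M\<^esub> D x)"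

lemma kd_pairing_eq_finsum:
  assumes v: "v \<in> kd_free A" and T: "finite T" "{x. v x \<noteq> \<zero>} \<subseteq> T" "T \<subseteq> carrier A"
  shows "kd_pairing v = (\<Oplus>\<^bsub>M\<^esub>x\<in>T. h (v x) \<otimes>\<^bsub>M\<^esub> D x)"
  unfolding kd_pairing_def
  by (rule M.add.finprod_mono_neutral_cong_left) (use v T in auto)

lemma kd_pairing_closed:
  assumes "v \<in> kd_free A" shows "kd_pairing v \<in> carrier M"
  unfolding kd_pairing_def by (rule M.finsum_closed) (use kd_free_support[OF assms] assms in auto)

lemma kd_pairing_add:
  assumes f: "f \<in> kd_free A" and g: "g \<in> kd_free A"
  shows "kd_pairing (kd_add A f g) = kd_pairing f \<oplus>\<^bsub>M\<^esub> kd_pairing g"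
proof -
  let ?T = "{x. f x \<noteq> \<zero>} \<union> {x. g x \<noteq> \<zero>}"
  have T: "finite ?T" "?T \<subseteq> carrier A" using f g by (auto simp: kd_free_support)
  have "kd_pairing (kd_add A f g) = (\<Oplus>\<^bsub>M\<^esub>x\<in>?T. h (kd_add A f g x) \<otimes>\<^bsub>M\<^esub> D x)"
    by (rule kd_pairing_eq_finsum[OF kd_free_add[OF f g]]) (use T in \<open>auto simp: kd_ops_apply\<close>)
  also have "\<dots> = (\<Oplus>\<^bsub>M\<^esub>x\<in>?T. h (f x) \<otimes>\<^bsub>M\<^esub> D x \<oplus>\<^bsub>M\<^esub> h (g x) \<otimes>\<^bsub>M\<^esub> D x)"
    by (rule M.add.finprod_cong') (use T f g in \<open>auto simp: kd_ops_apply M.l_distr\<close>)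
  also have "\<dots> = (\<Oplus>\<^bsub>M\<^esub>x\<in>?T. h (f x) \<otimes>\<^bsub>M\<^esub> D x) \<oplus>\<^bsub>M\<^esub> (\<Oplus>\<^bsub>M\<^esub>x\<in>?T. h (g x) \<otimes>\<^bsub>M\<^esub> D x)"
    by (rule M.finsum_addf) (use T f g in auto)
  also have "\<dots> = kd_pairing f \<oplus>\<^bsub>M\<^esub> kd_pairing g"
    using T f g by (simp add: kd_pairing_eq_finsum[where T = ?T])
  finally show ?thesis .
qed

lemma kd_pairing_smult:
  assumes c: "c \<in> carrier A" and f: "f \<in> kd_free A"
  shows "kd_pairing (kd_smult A c f) = h c \<otimes>\<^bsub>M\<^esub> kd_pairing f"
proof -
  let ?T = "{x. f x \<noteq> \<zero>}"
  have T: "finite ?T" "?T \<subseteq> carrier A" using f by (auto simp: kd_free_support)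
  have "kd_pairing (kd_smult A c f) = (\<Oplus>\<^bsub>M\<^esub>x\<in>?T. h (kd_smult A c f x) \<otimes>\<^bsub>M\<^esub> D x)"
    by (rule kd_pairing_eq_finsum[OF kd_free_smult[OF c f]]) (use T c in \<open>auto simp: kd_ops_apply\<close>)
  also have "\<dots> = (\<Oplus>\<^bsub>M\<^esub>x\<in>?T. h c \<otimes>\<^bsub>M\<^esub> (h (f x) \<otimes>\<^bsub>M\<^esub> D x))"
    by (rule M.add.finprod_cong') (use T c f in \<open>auto simp: kd_ops_apply M.m_assoc\<close>)
  also have "\<dots> = h c \<otimes>\<^bsub>M\<^esub> (\<Oplus>\<^bsub>M\<^esub>x\<in>?T. h (f x) \<otimes>\<^bsub>M\<^esub> D x)"
    by (rule M.finsum_rdistr[symmetric]) (use T c f in auto)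
  also have "\<dots> = h c \<otimes>\<^bsub>M\<^esub> kd_pairing f"
    using T f by (simp add: kd_pairing_eq_finsum[where T = ?T])
  finally show ?thesis .
qed

lemma kd_pairing_minus:
  assumes "f \<in> kd_free A" "g \<in> kd_free A"
  shows "kd_pairing (kd_minus A f g) = kd_pairing f \<ominus>\<^bsub>M\<^esub> kd_pairing g"
proof -
  have "kd_minus A f g = kd_add A f (kd_smult A (\<ominus> \<one>) g)"
    using assms by (auto simp: kd_ops_apply fun_eq_iff minus_eq l_minus)
  with assms show ?thesis
    by (simp add: kd_pairing_add kd_pairing_smult kd_free_smult kd_pairing_closed M.minus_eq M.l_minus)
qed

lemma kd_pairing_delta:
  assumes "a \<in> carrier A" shows "kd_pairing (kd_delta A a) = D a"
proof -
  have "kd_pairing (kd_delta A a) = (\<Oplus>\<^bsub>M\<^esub>x\<in>{a}. h (kd_delta A a x) \<otimes>\<^bsub>M\<^esub> D x)"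
    by (rule kd_pairing_eq_finsum[OF kd_free_delta[OF assms]]) (use assms in \<open>auto simp: kd_delta_def\<close>)
  then show ?thesis using assms by (simp add: kd_delta_def)
qed

lemma kd_pairing_gens:
  assumes "r \<in> kd_gens F A eta" shows "kd_pairing r = \<zero>\<^bsub>M\<^esub>"
  using assms unfolding kd_gens_def
proof (elim UnE CollectE exE conjE)
  fix a b assume r: "r = kd_minus A (kd_minus A (kd_delta A (a \<oplus> b)) (kd_delta A a)) (kd_delta A b)"
    and ab: "a \<in> carrier A" "b \<in> carrier A"
  then show ?thesis
    by (simp add: kd_pairing_minus kd_pairing_delta kd_free_minus kd_free_delta D_add
        M.minus_eq M.minus_add M.a_ac)
      (simp add: M.minus_add[symmetric] M.a_assoc[symmetric] M.r_neg)
next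
  fix a b assume r: "r = kd_minus A (kd_minus A (kd_delta A (a \<otimes> b)) (kd_smult A a (kd_delta A b)))
      (kd_smult A b (kd_delta A a))"
    and ab: "a \<in> carrier A" "b \<in> carrier A"
  then show ?thesis
    by (simp add: kd_pairing_minus kd_pairing_smult kd_pairing_delta kd_free_minus kd_free_smult
        kd_free_delta D_mult M.minus_eq M.minus_add M.a_ac)
      (simp add: M.minus_add[symmetric] M.a_assoc[symmetric] M.r_neg)
next
  fix l a assume r: "r = kd_minus A (kd_delta A (eta l \<otimes> a)) (kd_smult A (eta l) (kd_delta A a))"
    and la: "l \<in> carrier F" "a \<in> carrier A"
  then show ?thesis
    by (simp add: kd_pairing_minus kd_pairing_smult kd_pairing_delta kd_free_smult kd_free_delta
        D_eta M.minus_eq M.r_neg)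
qed

lemma kd_pairing_rels: "v \<in> kd_rels F A eta \<Longrightarrow> kd_pairing v = \<zero>\<^bsub>M\<^esub>"
proof (induction rule: kd_rels.induct)
  case kd_rels_zero
  then show ?case by (simp add: kd_pairing_def)
next
  case (kd_rels_step r c v)
  then show ?case
    by (simp add: kd_pairing_add kd_pairing_smult kd_pairing_gens kd_free_smult kd_gens_free
        kd_rels_free)
qed

theorem D_ker_d: "a \<in> ker_d F A eta \<Longrightarrow> D a = \<zero>\<^bsub>M\<^esub>"
  unfolding ker_d_def using kd_pairing_rels kd_pairing_delta by force

end

lemma derivation_along_comp:
  assumes "derivation_along F A eta M h D" and N: "cring N" and g: "g \<in> ring_hom M N"
  shows "derivation_along F A eta N (g \<circ> h) (g \<circ> D)"
proof -
  interpret derivation_along F A eta M h D by fact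
  interpret g: ring_hom_cring M N g by (rule ring_hom_cringI) (fact M.is_cring, fact N, fact g)
  show ?thesis
  proof (intro derivation_along.intro derivation_along_axioms.intro)
  qed (simp_all add: algebra_over_axioms N ring_hom_trans[OF hom g] D_add D_mult D_eta_zero)
qed

lemma derivation_along_dual_number_hom:
  assumes "derivation_along F A eta M h D"
    and sq: "\<And>a b. a \<in> carrier A \<Longrightarrow> b \<in> carrier A \<Longrightarrow> D a \<otimes>\<^bsub>M\<^esub> D b = \<zero>\<^bsub>M\<^esub>"
  shows "(\<lambda>a. monom (UP M) (h a) 0 \<oplus>\<^bsub>UP M\<^esub> monom (UP M) (D a) 1) \<in> ring_hom A (UP M)"
proof -
  interpret D: derivation_along F A eta M h D by fact
  interpret U: UP_cring M "UP M" by unfold_locales simp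
  show ?thesis
  proof (rule ring_hom_memI)
    fix a b assume a: "a \<in> carrier A" and b: "b \<in> carrier A"
    show "monom (UP M) (h (a \<otimes>\<^bsub>A\<^esub> b)) 0 \<oplus>\<^bsub>UP M\<^esub> monom (UP M) (D (a \<otimes>\<^bsub>A\<^esub> b)) 1 =
      (monom (UP M) (h a) 0 \<oplus>\<^bsub>UP M\<^esub> monom (UP M) (D a) 1) \<otimes>\<^bsub>UP M\<^esub>
      (monom (UP M) (h b) 0 \<oplus>\<^bsub>UP M\<^esub> monom (UP M) (D b) 1)"
      unfolding linear_poly_mult[OF D.M.is_cring D.h.hom_closed[OF a] D.D_closed[OF a]
          D.h.hom_closed[OF b] D.D_closed[OF b] sq[OF a b]]
      using a b by (simp add: D.D_mult)
    show "monom (UP M) (h (a \<oplus>\<^bsub>A\<^esub> b)) 0 \<oplus>\<^bsub>UP M\<^esub> monom (UP M) (D (a \<oplus>\<^bsub>A\<^esub> b)) 1 =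
      (monom (UP M) (h a) 0 \<oplus>\<^bsub>UP M\<^esub> monom (UP M) (D a) 1) \<oplus>\<^bsub>UP M\<^esub>
      (monom (UP M) (h b) 0 \<oplus>\<^bsub>UP M\<^esub> monom (UP M) (D b) 1)"
      using a b by (simp add: D.D_add U.P.a_ac)
  qed (simp_all add: D.D_one U.monom_one)
qed

lemma derivation_along_Pcu_vanishes:
  fixes C :: "'c ring"
  assumes "derivation_along F A eta C h D"
    and sq: "\<And>a b. a \<in> carrier A \<Longrightarrow> b \<in> carrier A \<Longrightarrow> D a \<otimes>\<^bsub>C\<^esub> D b = \<zero>\<^bsub>C\<^esub>"
    and a: "a \<in> Pcu TYPE('c) F A eta"
  shows "D a = \<zero>\<^bsub>C\<^esub>"
proof -
  interpret D: derivation_along F A eta C h D by fact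
  interpret U: UP_cring C "UP C" by unfold_locales simp
  let ?phi = "\<lambda>a. monom (UP C) (h a) 0 \<oplus>\<^bsub>UP C\<^esub> monom (UP C) (D a) 1"
  have "?phi \<in> ring_hom A (UP C)" by (rule derivation_along_dual_number_hom[OF assms(1) sq])
  moreover have "h \<circ> eta \<in> ring_hom F C" using D.eta_hom D.hom by (rule ring_hom_trans)
  moreover have "\<forall>l \<in> carrier F. ?phi (eta l) = monom (UP C) ((h \<circ> eta) l) 0"
    by (simp add: D.D_eta_zero)
  ultimately obtain c where c: "c \<in> carrier C" "?phi a = monom (UP C) c 0"
    using a D.M.is_cring unfolding Pcu_def by blast
  have a_carrier: "a \<in> carrier A" using a by (simp add: Pcu_def)
  have "D a = coeff (UP C) (?phi a) 1" using a_carrier by simp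
  also have "\<dots> = \<zero>\<^bsub>C\<^esub>" using c by simp
  finally show ?thesis .
qed

lemma up_deriv_derivation_along:
  assumes A: "algebra_over F A eta" and C: "cring C" and phi: "phi \<in> ring_hom A (UP C)"
    and phi_eta: "\<And>l. l \<in> carrier F \<Longrightarrow> \<exists>c \<in> carrier C. phi (eta l) = monom (UP C) c 0"
  shows "derivation_along F A eta (UP C) phi (\<lambda>a. up_deriv C (phi a))"
proof -
  interpret A: algebra_over F A eta by fact
  interpret C: cring C by fact
  interpret U: UP_cring C "UP C" by unfold_locales simp
  interpret phi: ring_hom_cring A "UP C" phi
    by (rule ring_hom_cringI) (fact A.is_cring, fact U.UP_cring, fact phi)
  have phi_eta_deriv: "up_deriv C (phi (eta l)) = \<zero>\<^bsub>UP C\<^esub>" if "l \<in> carrier F" for l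
    using phi_eta[OF that] by (auto simp: up_deriv_monom[OF C])
  show ?thesis
  proof (intro derivation_along.intro derivation_along_axioms.intro)
  qed (simp_all add: A U.UP_cring phi up_deriv_closed[OF C] up_deriv_add[OF C] up_deriv_mult[OF C]
      phi_eta_deriv)
qed

section \<open>The square-zero extension by Kaehler differentials\<close>

text \<open>Modulo \<open>0 \<times> kd_rels\<close>, the ring \<open>sqzero_ext A\<close> becomes \<open>A \<oplus> \<Omega>\<^sup>1(A)\<close> with \<open>\<Omega>\<^sup>1(A)\<close> squaring to
  zero, and \<open>kd_ext_d\<close> becomes the universal derivation.\<close>

definition sqzero_ext :: "'a ring \<Rightarrow> ('a \<times> ('a \<Rightarrow> 'a)) ring" where
  "sqzero_ext A = \<lparr>carrier = carrier A \<times> kd_free A,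
     monoid.mult = (\<lambda>x y. (fst x \<otimes>\<^bsub>A\<^esub> fst y,
       kd_add A (kd_smult A (fst x) (snd y)) (kd_smult A (fst y) (snd x)))),
     one = (\<one>\<^bsub>A\<^esub>, \<lambda>_. \<zero>\<^bsub>A\<^esub>),
     ring.zero = (\<zero>\<^bsub>A\<^esub>, \<lambda>_. \<zero>\<^bsub>A\<^esub>),
     ring.add = (\<lambda>x y. (fst x \<oplus>\<^bsub>A\<^esub> fst y, kd_add A (snd x) (snd y)))\<rparr>"

lemma sqzero_ext_simps:
  "carrier (sqzero_ext A) = carrier A \<times> kd_free A"
  "x \<otimes>\<^bsub>sqzero_ext A\<^esub> y = (fst x \<otimes>\<^bsub>A\<^esub> fst y,
     kd_add A (kd_smult A (fst x) (snd y)) (kd_smult A (fst y) (snd x)))"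
  "\<one>\<^bsub>sqzero_ext A\<^esub> = (\<one>\<^bsub>A\<^esub>, \<lambda>_. \<zero>\<^bsub>A\<^esub>)"
  "\<zero>\<^bsub>sqzero_ext A\<^esub> = (\<zero>\<^bsub>A\<^esub>, \<lambda>_. \<zero>\<^bsub>A\<^esub>)"
  "x \<oplus>\<^bsub>sqzero_ext A\<^esub> y = (fst x \<oplus>\<^bsub>A\<^esub> fst y, kd_add A (snd x) (snd y))"
  by (simp_all add: sqzero_ext_def)

definition kd_rel_ideal :: "'k ring \<Rightarrow> 'a ring \<Rightarrow> ('k \<Rightarrow> 'a) \<Rightarrow> ('a \<times> ('a \<Rightarrow> 'a)) set" where
  "kd_rel_ideal F A eta = Pair \<zero>\<^bsub>A\<^esub> ` kd_rels F A eta"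

definition kd_ext :: "'k ring \<Rightarrow> 'a ring \<Rightarrow> ('k \<Rightarrow> 'a) \<Rightarrow> ('a \<times> ('a \<Rightarrow> 'a)) set ring" where
  "kd_ext F A eta = sqzero_ext A Quot kd_rel_ideal F A eta"

definition kd_ext_incl :: "'k ring \<Rightarrow> 'a ring \<Rightarrow> ('k \<Rightarrow> 'a) \<Rightarrow> 'a \<Rightarrow> ('a \<times> ('a \<Rightarrow> 'a)) set" where
  "kd_ext_incl F A eta a = kd_rel_ideal F A eta +>\<^bsub>sqzero_ext A\<^esub> (a, \<lambda>_. \<zero>\<^bsub>A\<^esub>)"

definition kd_ext_d :: "'k ring \<Rightarrow> 'a ring \<Rightarrow> ('k \<Rightarrow> 'a) \<Rightarrow> 'a \<Rightarrow> ('a \<times> ('a \<Rightarrow> 'a)) set" where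
  "kd_ext_d F A eta a = kd_rel_ideal F A eta +>\<^bsub>sqzero_ext A\<^esub> (\<zero>\<^bsub>A\<^esub>, kd_delta A a)"

context algebra_over
begin

lemma sqzero_ext_cring: "cring (sqzero_ext A)"
proof (rule cringI)
  show "abelian_group (sqzero_ext A)"
  proof (rule abelian_groupI)
    fix x assume x: "x \<in> carrier (sqzero_ext A)"
    then show "\<zero>\<^bsub>sqzero_ext A\<^esub> \<oplus>\<^bsub>sqzero_ext A\<^esub> x = x"
      by (auto simp: sqzero_ext_simps kd_ops_apply fun_eq_iff)
    have "(\<lambda>t. \<ominus> snd x t) = kd_smult A (\<ominus> \<one>) (snd x)"
      using x by (auto simp: sqzero_ext_simps kd_ops_apply fun_eq_iff l_minus)
    then have "(\<ominus> fst x, \<lambda>t. \<ominus> snd x t) \<in> carrier (sqzero_ext A)"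
      using x by (auto simp: sqzero_ext_simps kd_free_smult)
    moreover have "(\<ominus> fst x, \<lambda>t. \<ominus> snd x t) \<oplus>\<^bsub>sqzero_ext A\<^esub> x = \<zero>\<^bsub>sqzero_ext A\<^esub>"
      using x by (auto simp: sqzero_ext_simps kd_ops_apply fun_eq_iff l_neg)
    ultimately show "\<exists>y\<in>carrier (sqzero_ext A). y \<oplus>\<^bsub>sqzero_ext A\<^esub> x = \<zero>\<^bsub>sqzero_ext A\<^esub>" ..
  qed (auto simp: sqzero_ext_simps kd_ops_apply fun_eq_iff kd_free_add kd_free_zero a_ac)
next
  show "comm_monoid (sqzero_ext A)"
    by (rule comm_monoidI)
      (auto simp: sqzero_ext_simps kd_ops_apply fun_eq_iff kd_free_add kd_free_smult kd_free_zero
        r_distr m_ac a_ac)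
next
  fix x y z
  assume "x \<in> carrier (sqzero_ext A)" "y \<in> carrier (sqzero_ext A)" "z \<in> carrier (sqzero_ext A)"
  then show "(x \<oplus>\<^bsub>sqzero_ext A\<^esub> y) \<otimes>\<^bsub>sqzero_ext A\<^esub> z =
      x \<otimes>\<^bsub>sqzero_ext A\<^esub> z \<oplus>\<^bsub>sqzero_ext A\<^esub> y \<otimes>\<^bsub>sqzero_ext A\<^esub> z"
    by (auto simp: sqzero_ext_simps kd_ops_apply fun_eq_iff l_distr r_distr a_ac)
qed

interpretation S: cring "sqzero_ext A" by (rule sqzero_ext_cring)

lemma sqzero_ext_mult_free:
  assumes "x \<in> carrier (sqzero_ext A)" "f \<in> kd_free A"
  shows "x \<otimes>\<^bsub>sqzero_ext A\<^esub> (\<zero>, f) = (\<zero>, kd_smult A (fst x) f)"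
  using assms by (auto simp: sqzero_ext_simps kd_ops_apply fun_eq_iff)

lemma kd_rel_ideal_is_ideal: "ideal (kd_rel_ideal F A eta) (sqzero_ext A)"
proof -
  let ?I = "kd_rel_ideal F A eta"
  have sub: "?I \<subseteq> carrier (sqzero_ext A)"
    using kd_rels_free by (auto simp: kd_rel_ideal_def sqzero_ext_simps)
  have l_closed: "x \<otimes>\<^bsub>sqzero_ext A\<^esub> i \<in> ?I"
    if i: "i \<in> ?I" and x: "x \<in> carrier (sqzero_ext A)" for i x
  proof -
    obtain r where "r \<in> kd_rels F A eta" "i = (\<zero>, r)"
      using i by (auto simp: kd_rel_ideal_def)
    moreover have "fst x \<in> carrier A" using x by (auto simp: sqzero_ext_simps)
    ultimately show ?thesis
      using x by (auto simp: kd_rel_ideal_def sqzero_ext_mult_free kd_rels_free intro: kd_rels_smult)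
  qed
  have "subgroup ?I (add_monoid (sqzero_ext A))"
  proof (rule S.add.subgroupI)
    show "?I \<noteq> {}" using kd_rels_zero by (auto simp: kd_rel_ideal_def)
  next
    fix i assume i: "i \<in> ?I"
    then have "\<ominus>\<^bsub>sqzero_ext A\<^esub> i = \<ominus>\<^bsub>sqzero_ext A\<^esub> \<one>\<^bsub>sqzero_ext A\<^esub> \<otimes>\<^bsub>sqzero_ext A\<^esub> i"
      using sub by (auto simp: S.l_minus)
    then show "\<ominus>\<^bsub>sqzero_ext A\<^esub> i \<in> ?I"
      using l_closed[OF i S.a_inv_closed[OF S.one_closed]] by simp
  next
    fix i j assume "i \<in> ?I" "j \<in> ?I"
    then show "i \<oplus>\<^bsub>sqzero_ext A\<^esub> j \<in> ?I"
      by (auto simp: kd_rel_ideal_def sqzero_ext_simps intro: kd_rels_add)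
  qed (fact sub)
  then show ?thesis
  proof (rule idealI[OF S.ring_axioms])
    fix i x assume i: "i \<in> ?I" and x: "x \<in> carrier (sqzero_ext A)"
    show "x \<otimes>\<^bsub>sqzero_ext A\<^esub> i \<in> ?I" using i x by (rule l_closed)
    have "i \<otimes>\<^bsub>sqzero_ext A\<^esub> x = x \<otimes>\<^bsub>sqzero_ext A\<^esub> i"
      using i x sub by (auto intro: S.m_comm)
    then show "i \<otimes>\<^bsub>sqzero_ext A\<^esub> x \<in> ?I" using i x by (simp add: l_closed)
  qed
qed

interpretation I: ideal "kd_rel_ideal F A eta" "sqzero_ext A" by (rule kd_rel_ideal_is_ideal)
interpretation P: ring_hom_cring "sqzero_ext A" "kd_ext F A eta" "(+>\<^bsub>sqzero_ext A\<^esub>) (kd_rel_ideal F A eta)"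
  unfolding kd_ext_def by (rule I.rcos_ring_hom_cring[OF sqzero_ext_cring])

lemma kd_ext_cring: "cring (kd_ext F A eta)"
  unfolding kd_ext_def by (rule I.quotient_is_cring[OF sqzero_ext_cring])

lemma kd_minus_minus:
  assumes "f \<in> kd_free A" "g \<in> kd_free A" "k \<in> kd_free A"
  shows "kd_minus A (kd_minus A f g) k = kd_minus A f (kd_add A g k)"
  using assms by (simp add: kd_ops_apply fun_eq_iff minus_eq minus_add a_assoc)

lemma kd_ext_d_eqI:
  assumes a: "a \<in> carrier A" and v: "v \<in> kd_free A"
    and rel: "kd_minus A (kd_delta A a) v \<in> kd_rels F A eta"
  shows "kd_ext_d F A eta a = kd_rel_ideal F A eta +>\<^bsub>sqzero_ext A\<^esub> (\<zero>, v)"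
proof -
  have eq: "(\<zero>, kd_delta A a) =
      (\<zero>, kd_minus A (kd_delta A a) v) \<oplus>\<^bsub>sqzero_ext A\<^esub> (\<zero>, v)"
    using a v by (simp add: sqzero_ext_simps kd_ops_apply fun_eq_iff kd_delta_def minus_eq a_assoc l_neg)
  have "(\<zero>, kd_delta A a) \<in> kd_rel_ideal F A eta +>\<^bsub>sqzero_ext A\<^esub> (\<zero>, v)"
    unfolding eq
    by (rule S.a_rcosI)
      (use rel v in \<open>auto simp: kd_rel_ideal_def sqzero_ext_simps kd_rels_free intro: I.a_subset\<close>)
  then have "kd_rel_ideal F A eta +>\<^bsub>sqzero_ext A\<^esub> (\<zero>, v) = kd_ext_d F A eta a"
    unfolding kd_ext_d_def by (rule I.a_repr_independence') (use v in \<open>simp add: sqzero_ext_simps\<close>)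
  then show ?thesis ..
qed

lemma kd_ext_incl_hom: "kd_ext_incl F A eta \<in> ring_hom A (kd_ext F A eta)"
proof -
  have "(\<lambda>a. (a, \<lambda>_. \<zero>)) \<in> ring_hom A (sqzero_ext A)"
    by (rule ring_hom_memI) (auto simp: sqzero_ext_simps kd_ops_apply kd_free_zero)
  moreover have "kd_ext_incl F A eta = (+>\<^bsub>sqzero_ext A\<^esub>) (kd_rel_ideal F A eta) \<circ> (\<lambda>a. (a, \<lambda>_. \<zero>))"
    by (simp add: fun_eq_iff kd_ext_incl_def)
  ultimately show ?thesis using ring_hom_trans P.homh by metis
qed

lemma kd_ext_d_add:
  assumes a: "a \<in> carrier A" and b: "b \<in> carrier A"
  shows "kd_ext_d F A eta (a \<oplus> b) = kd_ext_d F A eta a \<oplus>\<^bsub>kd_ext F A eta\<^esub> kd_ext_d F A eta b"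
proof -
  have "kd_minus A (kd_minus A (kd_delta A (a \<oplus> b)) (kd_delta A a)) (kd_delta A b) \<in> kd_rels F A eta"
    using a b by (intro kd_gens_rels) (auto simp: kd_gens_def)
  then have "kd_ext_d F A eta (a \<oplus> b) =
      kd_rel_ideal F A eta +>\<^bsub>sqzero_ext A\<^esub> ((\<zero>, kd_delta A a) \<oplus>\<^bsub>sqzero_ext A\<^esub> (\<zero>, kd_delta A b))"
    using a b by (simp add: kd_ext_d_eqI kd_free_add kd_free_delta kd_minus_minus sqzero_ext_simps)
  then show ?thesis
    using a b P.hom_add[of "(\<zero>, kd_delta A a)" "(\<zero>, kd_delta A b)"]
    by (simp add: kd_ext_d_def sqzero_ext_simps kd_free_delta)
qed

lemma kd_ext_d_mult:
  assumes a: "a \<in> carrier A" and b: "b \<in> carrier A"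
  shows "kd_ext_d F A eta (a \<otimes> b) = kd_ext_incl F A eta a \<otimes>\<^bsub>kd_ext F A eta\<^esub> kd_ext_d F A eta b
    \<oplus>\<^bsub>kd_ext F A eta\<^esub> kd_ext_incl F A eta b \<otimes>\<^bsub>kd_ext F A eta\<^esub> kd_ext_d F A eta a"
proof -
  let ?v = "kd_add A (kd_smult A a (kd_delta A b)) (kd_smult A b (kd_delta A a))"
  have carrier: "(a, \<lambda>_. \<zero>) \<in> carrier (sqzero_ext A)" "(b, \<lambda>_. \<zero>) \<in> carrier (sqzero_ext A)"
    "(\<zero>, kd_delta A a) \<in> carrier (sqzero_ext A)" "(\<zero>, kd_delta A b) \<in> carrier (sqzero_ext A)"
    using a b by (simp_all add: sqzero_ext_simps kd_free_delta kd_free_zero)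
  have "kd_minus A (kd_minus A (kd_delta A (a \<otimes> b)) (kd_smult A a (kd_delta A b)))
      (kd_smult A b (kd_delta A a)) \<in> kd_rels F A eta"
    using a b by (intro kd_gens_rels) (auto simp: kd_gens_def)
  then have "kd_ext_d F A eta (a \<otimes> b) = kd_rel_ideal F A eta +>\<^bsub>sqzero_ext A\<^esub> (\<zero>, ?v)"
    using a b by (simp add: kd_ext_d_eqI kd_free_add kd_free_smult kd_free_delta kd_minus_minus)
  also have "(\<zero>, ?v) = (a, \<lambda>_. \<zero>) \<otimes>\<^bsub>sqzero_ext A\<^esub> (\<zero>, kd_delta A b) \<oplus>\<^bsub>sqzero_ext A\<^esub>
      (b, \<lambda>_. \<zero>) \<otimes>\<^bsub>sqzero_ext A\<^esub> (\<zero>, kd_delta A a)"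
    unfolding sqzero_ext_mult_free[OF carrier(1) kd_free_delta[OF b]]
      sqzero_ext_mult_free[OF carrier(2) kd_free_delta[OF a]]
    by (simp add: sqzero_ext_simps)
  finally show ?thesis by (simp add: kd_ext_d_def kd_ext_incl_def carrier)
qed

lemma kd_ext_d_eta:
  assumes l: "l \<in> carrier F" and a: "a \<in> carrier A"
  shows "kd_ext_d F A eta (eta l \<otimes> a) = kd_ext_incl F A eta (eta l) \<otimes>\<^bsub>kd_ext F A eta\<^esub> kd_ext_d F A eta a"
proof -
  have "kd_minus A (kd_delta A (eta l \<otimes> a)) (kd_smult A (eta l) (kd_delta A a)) \<in> kd_rels F A eta"
    using l a by (intro kd_gens_rels) (auto simp: kd_gens_def)
  then have "kd_ext_d F A eta (eta l \<otimes> a) =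
      kd_rel_ideal F A eta +>\<^bsub>sqzero_ext A\<^esub> (\<zero>, kd_smult A (eta l) (kd_delta A a))"
    using l a by (simp add: kd_ext_d_eqI kd_free_smult kd_free_delta)
  also have "(\<zero>, kd_smult A (eta l) (kd_delta A a)) =
      (eta l, \<lambda>_. \<zero>) \<otimes>\<^bsub>sqzero_ext A\<^esub> (\<zero>, kd_delta A a)"
    using l a by (simp add: sqzero_ext_mult_free kd_free_delta kd_free_zero sqzero_ext_simps(1))
  finally show ?thesis
    using l a by (simp add: kd_ext_d_def kd_ext_incl_def sqzero_ext_simps(1) kd_free_delta kd_free_zero)
qed

lemma kd_ext_derivation:
  "derivation_along F A eta (kd_ext F A eta) (kd_ext_incl F A eta) (kd_ext_d F A eta)"
proof (intro derivation_along.intro derivation_along_axioms.intro)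
  show "kd_ext_d F A eta a \<in> carrier (kd_ext F A eta)" if "a \<in> carrier A" for a
    unfolding kd_ext_d_def using that by (auto simp: sqzero_ext_simps kd_free_delta)
  show "kd_ext_d F A eta (eta l \<otimes> a) = kd_ext_incl F A eta (eta l) \<otimes>\<^bsub>kd_ext F A eta\<^esub> kd_ext_d F A eta a"
    if "l \<in> carrier F" "a \<in> carrier A" for l a
    using that by (rule kd_ext_d_eta)
qed (simp_all add: algebra_over_axioms kd_ext_cring kd_ext_incl_hom kd_ext_d_add kd_ext_d_mult)

lemma kd_ext_d_square_zero:
  assumes "a \<in> carrier A" "b \<in> carrier A"
  shows "kd_ext_d F A eta a \<otimes>\<^bsub>kd_ext F A eta\<^esub> kd_ext_d F A eta b = \<zero>\<^bsub>kd_ext F A eta\<^esub>"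
proof -
  have "(\<zero>, kd_delta A a) \<otimes>\<^bsub>sqzero_ext A\<^esub> (\<zero>, kd_delta A b) = \<zero>\<^bsub>sqzero_ext A\<^esub>"
    by (simp add: sqzero_ext_simps kd_ops_apply fun_eq_iff kd_delta_def)
  then show ?thesis
    using assms P.hom_mult[of "(\<zero>, kd_delta A a)" "(\<zero>, kd_delta A b)"]
    by (simp add: kd_ext_d_def sqzero_ext_simps(1) kd_free_delta)
qed

lemma kd_ext_d_eq_zero_imp_kd_rels:
  assumes "a \<in> carrier A" and "kd_ext_d F A eta a = \<zero>\<^bsub>kd_ext F A eta\<^esub>"
  shows "kd_delta A a \<in> kd_rels F A eta"
proof -
  have "(\<zero>, kd_delta A a) \<in> kd_rel_ideal F A eta"
    using assms by (intro I.rcos_const_imp_mem)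
      (simp_all add: kd_ext_d_def kd_ext_def FactRing_def sqzero_ext_simps kd_free_delta)
  then show ?thesis by (auto simp: kd_rel_ideal_def)
qed

end

section \<open>Cardinality\<close>

lemma FactRing_carrier_lepoll:
  assumes "ideal I R" shows "carrier (R Quot I) \<lesssim> carrier R"
proof -
  have "carrier (R Quot I) = (\<lambda>x. I +>\<^bsub>R\<^esub> x) ` carrier R"
    by (auto simp: FactRing_def A_RCOSETS_def RCOSETS_def a_r_coset_def)
  then show ?thesis by (simp add: image_lepoll)
qed

lemma kd_free_lepoll_Fpow: "kd_free A \<lesssim> Fpow (carrier A \<times> carrier A)"
proof -
  define graph :: "('a \<Rightarrow> 'a) \<Rightarrow> ('a \<times> 'a) set"
    where "graph f = (\<lambda>t. (t, f t)) ` {t. f t \<noteq> \<zero>\<^bsub>A\<^esub>}" for f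
  have agree: "f t = g t" if eq: "graph f = graph g" and nz: "f t \<noteq> \<zero>\<^bsub>A\<^esub>" for f g t
  proof -
    have "(t, f t) \<in> graph f" using nz by (simp add: graph_def)
    then have "(t, f t) \<in> graph g" by (simp only: eq)
    then show ?thesis by (auto simp: graph_def)
  qed
  have "inj_on graph (kd_free A)"
  proof (rule inj_onI, rule ext)
    fix f g t assume eq: "graph f = graph g"
    show "f t = g t"
    proof (cases "g t = \<zero>\<^bsub>A\<^esub>")
      case True
      then show ?thesis using agree[OF eq, of t] by fastforce
    next
      case False
      then show ?thesis using agree[OF eq[symmetric], of t] by simp
    qed
  qed
  moreover have "graph f \<in> Fpow (carrier A \<times> carrier A)" if "f \<in> kd_free A" for f
  proof -
    have "finite {t. f t \<noteq> \<zero>\<^bsub>A\<^esub>}" "{t. f t \<noteq> \<zero>\<^bsub>A\<^esub>} \<subseteq> carrier A" "\<And>t. f t \<in> carrier A"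
      using that unfolding kd_free_def by blast+
    then show ?thesis unfolding graph_def Fpow_def by blast
  qed
  ultimately show ?thesis unfolding lepoll_def by blast
qed

lemma infinite_times_Fpow_lepoll:
  assumes "infinite W" shows "W \<times> Fpow (W \<times> W) \<lesssim> W"
proof -
  have sq: "W \<times> W \<approx> W"
    using card_of_Times_same_infinite[OF assms] by (simp add: eqpoll_iff_card_of_ordIso)
  have "Fpow (W \<times> W) \<approx> W"
    using eqpoll_trans[OF eqpoll_Fpow sq] assms infinite_imp_nonempty[OF assms]
    by (simp add: finite_cartesian_product_iff)
  then have "W \<times> Fpow (W \<times> W) \<approx> W \<times> W" by (rule times_eqpoll_cong[OF eqpoll_refl])
  then show ?thesis using sq by (blast intro: eqpoll_imp_lepoll eqpoll_trans)
qed

lemma sqzero_ext_carrier_lepoll: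
  assumes "infinite (carrier A)" shows "carrier (sqzero_ext A) \<lesssim> carrier A"
  unfolding sqzero_ext_simps
  by (rule lepoll_trans[OF times_lepoll_mono[OF lepoll_refl kd_free_lepoll_Fpow]
        infinite_times_Fpow_lepoll[OF assms]])

lemma cring_lepoll_copy:
  fixes Q :: "('q, 'm) ring_scheme" and S :: "'b set"
  assumes Q: "cring Q" and le: "carrier Q \<lesssim> S"
  obtains C :: "'b ring" and g where "cring C" "g \<in> ring_hom Q C" "inj_on g (carrier Q)"
proof -
  interpret Q: cring Q by fact
  obtain g :: "'q \<Rightarrow> 'b" where g: "inj_on g (carrier Q)"
    using le unfolding lepoll_def by blast
  let ?g' = "inv_into (carrier Q) g"
  define C :: "'b ring" where "C = \<lparr>carrier = g ` carrier Q,
    monoid.mult = (\<lambda>x y. g (?g' x \<otimes>\<^bsub>Q\<^esub> ?g' y)), one = g \<one>\<^bsub>Q\<^esub>,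
    ring.zero = g \<zero>\<^bsub>Q\<^esub>, ring.add = (\<lambda>x y. g (?g' x \<oplus>\<^bsub>Q\<^esub> ?g' y))\<rparr>"
  have hom: "g \<in> ring_hom Q C"
    by (rule ring_hom_memI) (auto simp: C_def inv_into_f_f[OF g])
  then have "g \<in> ring_iso Q C"
    using g by (auto simp: ring_iso_def bij_betw_def C_def)
  then have "cring (C\<lparr>zero := g \<zero>\<^bsub>Q\<^esub>\<rparr>)" by (rule Q.ring_iso_imp_img_cring)
  then have "cring C" by (simp add: C_def)
  from this hom g show ?thesis by (rule that)
qed

section \<open>\<open>P\<^sup>c\<^sup>u(A) = ker d\<close>\<close>

theorem ker_d_subset_Pcu:
  fixes F :: "'k ring" and A :: "'a ring" and eta :: "'k \<Rightarrow> 'a"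
  assumes F: "field F" and cz: "char_zero_ring F" and A: "algebra_over F A eta"
  shows "ker_d F A eta \<subseteq> Pcu TYPE('c) F A eta"
proof
  fix a assume a: "a \<in> ker_d F A eta"
  then have a_carrier: "a \<in> carrier A" by (simp add: ker_d_def)
  show "a \<in> Pcu TYPE('c) F A eta" unfolding Pcu_def
  proof (intro CollectI conjI allI impI a_carrier)
    fix C :: "'c ring" and etaC phi
    assume "cring C \<and> etaC \<in> ring_hom F C \<and> phi \<in> ring_hom A (UP C) \<and>
      (\<forall>l\<in>carrier F. phi (eta l) = monom (UP C) (etaC l) 0)"
    then have C: "cring C" and etaC: "etaC \<in> ring_hom F C" and phi: "phi \<in> ring_hom A (UP C)"
      and phi_eta: "\<And>l. l \<in> carrier F \<Longrightarrow> phi (eta l) = monom (UP C) (etaC l) 0"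
      by auto
    interpret C: cring C by fact
    interpret U: UP_cring C "UP C" by unfold_locales simp
    interpret D: derivation_along F A eta "UP C" phi "\<lambda>a. up_deriv C (phi a)"
      by (rule up_deriv_derivation_along[OF A C phi])
        (use phi_eta etaC in \<open>auto intro: ring_hom_closed\<close>)
    have "up_deriv C (phi a) = \<zero>\<^bsub>UP C\<^esub>" using D.D_ker_d[OF a] .
    then have "phi a = monom (UP C) (coeff (UP C) (phi a) 0) 0"
      by (rule up_deriv_eq_zero_imp_const[OF C D.h.hom_closed[OF a_carrier]])
        (rule char_zero_add_pow_cancel[OF F cz C etaC])
    moreover have "coeff (UP C) (phi a) 0 \<in> carrier C"
      using a_carrier by simp
    ultimately show "\<exists>c\<in>carrier C. phi a = monom (UP C) c 0" by blast
  qed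
qed

theorem Pcu_subset_ker_d:
  fixes F :: "'k ring" and A :: "'a ring" and eta :: "'k \<Rightarrow> 'a"
  assumes F: "field F" and cz: "char_zero_ring F" and A: "algebra_over F A eta"
  shows "Pcu TYPE('a) F A eta \<subseteq> ker_d F A eta"
proof
  interpret algebra_over F A eta by fact
  fix a assume a: "a \<in> Pcu TYPE('a) F A eta"
  then have a_carrier: "a \<in> carrier A" by (simp add: Pcu_def)
  have "kd_delta A a \<in> kd_rels F A eta"
  proof (cases "\<one>\<^bsub>A\<^esub> = \<zero>\<^bsub>A\<^esub>")
    case True
    then have "kd_delta A a = (\<lambda>_. \<zero>\<^bsub>A\<^esub>)" by (simp add: kd_delta_def fun_eq_iff)
    then show ?thesis by (simp add: kd_rels_zero)
  next
    case False
    have le: "carrier (kd_ext F A eta) \<lesssim> carrier A"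
      unfolding kd_ext_def
      by (rule lepoll_trans[OF FactRing_carrier_lepoll[OF kd_rel_ideal_is_ideal]
            sqzero_ext_carrier_lepoll[OF char_zero_infinite_carrier[OF F cz A False]]])
    obtain C :: "'a ring" and g where C: "cring C" and g: "g \<in> ring_hom (kd_ext F A eta) C"
      and inj: "inj_on g (carrier (kd_ext F A eta))"
      using cring_lepoll_copy[OF kd_ext_cring le] .
    interpret g: ring_hom_cring "kd_ext F A eta" C g
      by (rule ring_hom_cringI) (fact kd_ext_cring, fact C, fact g)
    interpret d: derivation_along F A eta "kd_ext F A eta" "kd_ext_incl F A eta" "kd_ext_d F A eta"
      by (rule kd_ext_derivation)
    have "(g \<circ> kd_ext_d F A eta) a = \<zero>\<^bsub>C\<^esub>"
      by (rule derivation_along_Pcu_vanishes[OF derivation_along_comp[OF kd_ext_derivation C g] _ a])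
        (simp add: g.hom_mult[symmetric] kd_ext_d_square_zero)
    then have "kd_ext_d F A eta a = \<zero>\<^bsub>kd_ext F A eta\<^esub>"
      using inj a_carrier by (auto simp: inj_on_def)
    then show ?thesis by (rule kd_ext_d_eq_zero_imp_kd_rels[OF a_carrier])
  qed
  with a_carrier show "a \<in> ker_d F A eta" by (simp add: ker_d_def)
qed

theorem mainTheorem13:
  fixes F :: "'k ring" and A :: "'a ring" and eta :: "'k \<Rightarrow> 'a"
  assumes "field F" and "char_zero_ring F"
    and "cring A" and "eta \<in> ring_hom F A"
  shows "Pcu TYPE('a) F A eta = ker_d F A eta
         \<and> ker_d F A eta = deRham_H0 F A eta
         \<and> ker_d F A eta \<subseteq> Pcu TYPE('c) F A eta"
proof (intro conjI)
  have A: "algebra_over F A eta" using assms(3,4) by (rule algebra_over.intro)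
  show "Pcu TYPE('a) F A eta = ker_d F A eta"
    using Pcu_subset_ker_d[OF assms(1,2) A] ker_d_subset_Pcu[OF assms(1,2) A] by (rule subset_antisym)
  show "ker_d F A eta = deRham_H0 F A eta" by (simp add: deRham_H0_def)
  show "ker_d F A eta \<subseteq> Pcu TYPE('c) F A eta" by (rule ker_d_subset_Pcu[OF assms(1,2) A])
qed

end
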